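(* For integers $I\ge 0$ and $S\ge 1$ let $P(I,S)$ be the probability, in the Bluetooth pairing process described in the context, that a fixed clean device $w_t$ ends up paired with an infected device. Then $P(0,S)=0$ and $P(1,S)=\frac{1}{S}$ for every $S\ge 1$, and for all integers $I\ge 2$, $S\ge 1$, $$P(I,S)=\frac{1}{I+S-1}+\frac{S-1}{I+S-1}\,P(I-1,S-1)+\frac{I-1}{I+S-1}\,P(I-2,S),$$ with the convention $P(I',0)=0$ for every $I'\ge 0$ (the term $P(I-1,S-1)$ appears only with coefficient $0$ when $S=1$).
   Context: Pairing process: let $I,S\ge 0$ be integers. There are $I$ infected devices $b_1,\dots,b_I$ and $S$ clean devices $w_1,\dots,w_S$. For $t=1,2,\dots,I$ in this order: if $b_t$ is not yet paired and at least one device other than $b_t$ (infected or clean) is not yet paired, then $b_t$ chooses one of the currently unpaired devices other than itself uniformly at random, independently of all previous choices, and becomes paired with it; otherwise $b_t$ does nothing. Each device belongs to at most one pair, and pairs are never broken. A clean device that ends up paired with an infected device becomes infected; clean devices never initiate pairings. The probability $P(I,S)$ does not depend on which clean device $w_t$ is fixed. *)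

theory Defs
  imports "HOL-Probability.Probability"
begin

text \<open>Devices: infected b_{t+1} is Inl t (t < I), clean w_{j+1} is Inr j (j < S).
  A state records the set of unpaired devices and the set of pairs formed so far,
  each pair stored as (initiating infected device, chosen partner).\<close>

type_synonym device = "nat + nat"
type_synonym pstate = "device set \<times> (device \<times> device) set"

definition init_state :: "nat \<Rightarrow> nat \<Rightarrow> pstate" where
  "init_state I S = (Inl ` {..<I} \<union> Inr ` {..<S}, {})"

definition pair_step :: "nat \<Rightarrow> pstate \<Rightarrow> pstate pmf" where
  "pair_step t st =
     (let U = fst st; Pr = snd st in
      if Inl t \<in> U \<and> U - {Inl t} \<noteq> {} then
        map_pmf (\<lambda>y. (U - {Inl t, y}, insert (Inl t, y) Pr)) (pmf_of_set (U - {Inl t}))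
      else return_pmf st)"

primrec pair_run :: "nat \<Rightarrow> nat \<Rightarrow> nat \<Rightarrow> pstate pmf" where
  "pair_run I S 0 = return_pmf (init_state I S)"
| "pair_run I S (Suc k) = pair_run I S k \<bind> pair_step k"

definition pair_process :: "nat \<Rightarrow> nat \<Rightarrow> pstate pmf" where
  "pair_process I S = pair_run I S I"

text \<open>P(I,S): probability that the fixed clean device Inr 0 ends up paired with an
  infected device.  For S = 0 there is no device Inr 0, so P(I,0) = 0 (the convention).\<close>
definition P :: "nat \<Rightarrow> nat \<Rightarrow> real" where
  "P I S = measure_pmf.prob (pair_process I S) {st. \<exists>i. (Inl i, Inr 0) \<in> snd st}"

end

theory Submission
  imports Defs
begin

text \<open>Follow the fixed clean device through the turns of the infected devices that are still
  unpaired when their turn comes ("active" ones). If a active devices remain, together with c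
  further unpaired devices that never initiate a pairing, then the next active device picks the
  target with probability 1/(a+c); otherwise it removes either a passive device or another
  active one, leaving (a-1, c-1) or (a-2, c). The resulting recursion depends only on (a, c),
  and at the start a = I, c = S - 1, which turns it into the recurrence for P. An infected device
  chosen before its turn is already paired and skips it, which is why that case removes two.\<close>

lemma measure_bind_pmf_of_set:
  assumes "finite A" "A \<noteq> {}"
  shows "measure_pmf.prob (pmf_of_set A \<bind> f) X
           = (\<Sum>y\<in>A. measure_pmf.prob (f y) X) / real (card A)"
proof -
  have "emeasure (measure_pmf (pmf_of_set A \<bind> f)) X
          = (\<Sum>y\<in>A. emeasure (measure_pmf (f y)) X) / card A"
    using assms by (simp add: nn_integral_pmf_of_set)
  also have "\<dots> = ennreal (\<Sum>y\<in>A. measure_pmf.prob (f y) X) / of_nat (card A)"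
    using assms by (simp add: measure_pmf.emeasure_eq_measure sum_ennreal)
  also have "\<dots> = ennreal ((\<Sum>y\<in>A. measure_pmf.prob (f y) X) / real (card A))"
    using assms
    by (subst ennreal_of_nat_eq_real_of_nat, subst divide_ennreal)
       (auto simp: sum_nonneg card_gt_0_iff)
  finally show ?thesis
    by (simp add: measure_pmf.emeasure_eq_measure) (subst (asm) ennreal_inj; auto simp: sum_nonneg)
qed

lemma sum_three_valued:
  assumes "finite A" "z \<in> A" "B \<subseteq> A - {z}"
  shows "(\<Sum>y\<in>A. if y = z then u else if y \<in> B then p else q)
           = u + real (card B) * p + real (card A - 1 - card B) * q"
proof -
  have finB: "finite B" using assms finite_subset by blast
  have "(\<Sum>y\<in>A. if y = z then u else if y \<in> B then p else q)
          = u + (\<Sum>y\<in>A - {z}. if y \<in> B then p else q)"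
    using assms by (simp add: sum.remove)
  also have "(\<Sum>y\<in>A - {z}. if y \<in> B then p else q)
               = (\<Sum>y\<in>A - {z} - B. q) + (\<Sum>y\<in>B. p)"
    using assms finB by (simp add: sum.subset_diff[of B "A - {z}"] sum.neutral)
  moreover have "card (A - {z} - B) = card A - 1 - card B"
    using assms finB by (simp add: card_Diff_subset)
  ultimately show ?thesis by simp
qed

primrec run_turns :: "pstate \<Rightarrow> nat list \<Rightarrow> pstate pmf" where
  "run_turns st [] = return_pmf st"
| "run_turns st (t # ts) = pair_step t st \<bind> (\<lambda>st'. run_turns st' ts)"

lemma run_turns_snoc: "run_turns st (ts @ [t]) = run_turns st ts \<bind> pair_step t"
  by (induction ts arbitrary: st) (simp_all add: bind_return_pmf' bind_assoc_pmf bind_return_pmf)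

lemma pair_run_eq_run_turns: "pair_run I S k = run_turns (init_state I S) [0..<k]"
  by (induction k) (simp_all add: run_turns_snoc)

lemma pair_step_active:
  assumes "Inl t \<in> U" "x \<in> U" "x \<noteq> Inl t"
  shows "pair_step t (U, Pr)
           = map_pmf (\<lambda>y. (U - {Inl t, y}, insert (Inl t, y) Pr)) (pmf_of_set (U - {Inl t}))"
  using assms by (auto simp: pair_step_def)

lemma pair_step_inactive: "Inl t \<notin> U \<Longrightarrow> pair_step t (U, Pr) = return_pmf (U, Pr)"
  by (simp add: pair_step_def)

lemma pairs_mono_run_turns:
  "finite (fst st) \<Longrightarrow> st' \<in> set_pmf (run_turns st ts) \<Longrightarrow> snd st \<subseteq> snd st'"
proof (induction ts arbitrary: st)
  case Nil
  then show ?case by simp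
next
  case (Cons t ts)
  obtain U Pr where st: "st = (U, Pr)" by force
  from Cons.prems obtain s where s: "s \<in> set_pmf (pair_step t st)"
    and st': "st' \<in> set_pmf (run_turns s ts)"
    by auto
  have "finite (fst s) \<and> snd st \<subseteq> snd s"
    using s Cons.prems(1) by (auto simp: pair_step_def st Let_def split: if_splits)
  then show ?case using Cons.IH st' by blast
qed

definition target_paired :: "pstate set" where
  "target_paired = {st. \<exists>i. (Inl i, Inr 0) \<in> snd st}"

lemma prob_target_paired_stays:
  "finite (fst st) \<Longrightarrow> st \<in> target_paired \<Longrightarrow>
     measure_pmf.prob (run_turns st ts) target_paired = 1"
  by (subst measure_pmf.prob_eq_1)
     (auto simp: AE_measure_pmf_iff target_paired_def dest!: pairs_mono_run_turns)

text \<open>infect_prob a c is the probability for the target when a active infected devices and c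
  passive devices besides the target are unpaired.\<close>

fun infect_prob :: "nat \<Rightarrow> nat \<Rightarrow> real" where
  "infect_prob 0 c = 0"
| "infect_prob (Suc a) c =
     (1 + real c * infect_prob a (c - 1) + real a * infect_prob (a - 1) c) / real (Suc a + c)"

declare infect_prob.simps(2) [simp del]

lemma infect_prob_Suc_eq:
  "infect_prob (Suc a) c = 1 / real (Suc a + c) + real c / real (Suc a + c) * infect_prob a (c - 1)
                           + real a / real (Suc a + c) * infect_prob (a - 1) c"
  by (simp add: infect_prob.simps(2) add_divide_distrib)

definition active_turns :: "device set \<Rightarrow> nat list \<Rightarrow> nat" where
  "active_turns U ts = card (U \<inter> Inl ` set ts)"

lemma prob_target_paired_run_turns:
  assumes "finite U" "distinct ts" "Inr 0 \<in> U" "(U, Pr) \<notin> target_paired"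
  shows "measure_pmf.prob (run_turns (U, Pr) ts) target_paired
           = infect_prob (active_turns U ts) (card U - 1 - active_turns U ts)"
  using assms
proof (induction ts arbitrary: U Pr)
  case Nil
  then show ?case by (simp add: active_turns_def)
next
  case (Cons t ts)
  show ?case
  proof (cases "Inl t \<in> U")
    case False
    then have "U \<inter> Inl ` set (t # ts) = U \<inter> Inl ` set ts" by auto
    with False Cons show ?thesis by (simp add: pair_step_inactive active_turns_def bind_return_pmf)
  next
    case True
    define A where "A = U - {Inl t}"
    define X where "X = U \<inter> Inl ` set ts"
    define a where "a = card X"
    define c where "c = card U - 2 - a"
    have finA: "finite A" and target: "Inr 0 \<in> A" using Cons.prems by (auto simp: A_def)
    have X_sub: "X \<subseteq> A - {Inr 0}" using Cons.prems(2) by (auto simp: X_def A_def)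
    have finX: "finite X" using X_sub finA finite_subset by blast
    have card_A: "card A = card U - 1" using True Cons.prems(1) by (simp add: A_def)
    have "card X \<le> card A - 1" "card A > 0"
      using card_mono[OF _ X_sub] finA target by (auto simp: card_gt_0_iff)
    then have card_U: "card U = a + c + 2" using card_A a_def c_def by linarith
    have "U \<inter> Inl ` set (t # ts) = insert (Inl t) X" using True by (auto simp: X_def)
    moreover have "Inl t \<notin> X" using X_sub by (auto simp: A_def)
    ultimately have active: "active_turns U (t # ts) = Suc a"
      using finX by (simp add: active_turns_def a_def)
    define h where
      "h y = (if y = Inr 0 then 1 else if y \<in> X then infect_prob (a - 1) c else infect_prob a (c - 1))"
      for y
    have choice: "measure_pmf.prob (run_turns (U - {Inl t, y}, insert (Inl t, y) Pr) ts) target_paired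
                    = h y" if y: "y \<in> A" for y
    proof (cases "y = Inr 0")
      case True
      then show ?thesis
        using Cons.prems(1)
        by (simp add: h_def, intro prob_target_paired_stays) (auto simp: target_paired_def)
    next
      case False
      have "X - {y} = (U - {Inl t, y}) \<inter> Inl ` set ts"
        using Cons.prems(2) by (auto simp: X_def)
      then have active': "active_turns (U - {Inl t, y}) ts = card (X - {y})"
        by (simp add: active_turns_def X_def)
      have "U - {Inl t, y} = A - {y}" by (auto simp: A_def)
      then have "card (U - {Inl t, y}) = a + c" using y finA card_A card_U by simp
      moreover have "(y \<in> X \<and> card (X - {y}) = a - 1 \<and> a \<ge> 1) \<or> (y \<notin> X \<and> card (X - {y}) = a)"
        using finX by (cases "y \<in> X") (auto simp: a_def card_gt_0_iff Suc_le_eq)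
      moreover have "measure_pmf.prob (run_turns (U - {Inl t, y}, insert (Inl t, y) Pr) ts) target_paired
          = infect_prob (card (X - {y})) (card (U - {Inl t, y}) - 1 - card (X - {y}))"
        using Cons.IH[of "U - {Inl t, y}"] Cons.prems False by (simp add: active' target_paired_def)
      ultimately show ?thesis using False by (auto simp: h_def)
    qed
    have "A \<noteq> {}" using target by blast
    have "run_turns (U, Pr) (t # ts)
            = pmf_of_set A \<bind> (\<lambda>y. run_turns (U - {Inl t, y}, insert (Inl t, y) Pr) ts)"
      using pair_step_active[OF True Cons.prems(3)]
      by (simp add: A_def bind_map_pmf)
    then have "measure_pmf.prob (run_turns (U, Pr) (t # ts)) target_paired
        = (\<Sum>y\<in>A. measure_pmf.prob (run_turns (U - {Inl t, y}, insert (Inl t, y) Pr) ts) target_paired)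
            / real (card A)"
      by (simp add: measure_bind_pmf_of_set[OF finA \<open>A \<noteq> {}\<close>])
    also have "\<dots> = (\<Sum>y\<in>A. h y) / real (card A)"
      using choice by simp
    also have "\<dots> = (1 + real a * infect_prob (a - 1) c + real c * infect_prob a (c - 1))
                      / real (Suc a + c)"
      using sum_three_valued[OF finA target X_sub] card_A card_U by (simp add: h_def a_def)
    finally show ?thesis using active card_U by (simp add: infect_prob.simps(2))
  qed
qed

lemma P_eq_infect_prob:
  assumes "S \<ge> 1"
  shows "P I S = infect_prob I (S - 1)"
proof -
  define U :: "device set" where "U = Inl ` {..<I} \<union> Inr ` {..<S}"
  have "U \<inter> Inl ` set [0..<I] = Inl ` {..<I}" by (auto simp: U_def)
  then have "active_turns U [0..<I] = I" by (simp add: active_turns_def card_image)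
  moreover have "card U = I + S"
    unfolding U_def by (subst card_Un_disjoint) (auto simp: card_image)
  moreover have "P I S = measure_pmf.prob (run_turns (U, {}) [0..<I]) target_paired"
    by (simp add: P_def pair_process_def pair_run_eq_run_turns init_state_def U_def target_paired_def)
  ultimately show ?thesis
    using assms prob_target_paired_run_turns[of U "[0..<I]" "{}"]
    by (simp add: U_def target_paired_def)
qed

theorem mainTheorem1:
  shows "(\<forall>S::nat. S \<ge> 1 \<longrightarrow> P 0 S = 0)
       \<and> (\<forall>S::nat. S \<ge> 1 \<longrightarrow> P 1 S = 1 / real S)
       \<and> (\<forall>I S::nat. I \<ge> 2 \<longrightarrow> S \<ge> 1 \<longrightarrow>
            P I S = 1 / real (I + S - 1)
                    + real (S - 1) / real (I + S - 1) * P (I - 1) (S - 1)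
                    + real (I - 1) / real (I + S - 1) * P (I - 2) S)"
proof (intro conjI allI impI)
  fix S :: nat assume "S \<ge> 1"
  then show "P 0 S = 0" and "P 1 S = 1 / real S"
    by (simp_all add: P_eq_infect_prob infect_prob.simps(2))
next
  fix I S :: nat assume "I \<ge> 2" and "S \<ge> 1"
  then obtain k where k: "I = Suc (Suc k)" by (metis add_2_eq_Suc le_Suc_ex)
  have n: "I - 1 = Suc k" "I - 2 = k" "I + S - 1 = Suc (Suc k) + (S - 1)"
    using k \<open>S \<ge> 1\<close> by simp_all
  have "real (S - 1) * P (I - 1) (S - 1) = real (S - 1) * infect_prob (Suc k) (S - 1 - 1)"
    using n \<open>S \<ge> 1\<close> P_eq_infect_prob[of "S - 1" "Suc k"] by (cases "S = 1") auto
  moreover have "P I S = infect_prob (Suc (Suc k)) (S - 1)" "P (I - 2) S = infect_prob k (S - 1)"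
    using \<open>S \<ge> 1\<close> k by (simp_all add: P_eq_infect_prob)
  ultimately show "P I S = 1 / real (I + S - 1)
                    + real (S - 1) / real (I + S - 1) * P (I - 1) (S - 1)
                    + real (I - 1) / real (I + S - 1) * P (I - 2) S"
    unfolding n by (simp only: infect_prob_Suc_eq times_divide_eq_left diff_Suc_1)
qed

end
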